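(* Let $n\ge2$, $\mathbf i\in\Sigma_n$, $0\le s\le n(n-1)/2$ and $\bullet\in\{D,A\}$. Then there is a canonical injective map $\Psi_\bullet(\mathbf i,s):\mathcal{GP}(\mathbf i)\hookrightarrow\mathcal{GP}(E_\bullet(s)(\mathbf i))$ whose image is exactly the set of rigorous paths $P$ of $G(E_\bullet(s)(\mathbf i))$ such that $P$ does not switch wires at any node lying on $\ell_\bullet$, where $\ell_D:=\ell_{n+1}$ and $\ell_A:=\ell_1$ (wires of $G(E_\bullet(s)(\mathbf i))$). In particular $|\mathcal{GP}(E_\bullet(s)(\mathbf i))|$ equals $|\mathcal{GP}(\mathbf i)|$ plus the number of rigorous paths of $E_\bullet(s)(\mathbf i)$ that switch wires at some node of $\ell_\bullet$.
   Context: $\Sigma_{m+1}$: reduced words of the longest element of $\mathfrak S_{m+1}$ in $s_i=(i,i+1)$, of length $m(m+1)/2$. Extensions: for $\mathbf i=(i_1,\dots,i_M)\in\Sigma_n$ ($M=n(n-1)/2$) and $0\le s\le M$, let $\mathbf i^-(s)=(i_1,\dots,i_{M-s})$, $\mathbf i^+(s)=(i_{M-s+1},\dots,i_M)$; for a word $\mathbf w$, $\mathbf w+1$ adds $1$ to every letter. $E_D(s)(\mathbf i):=\mathbf i^-(s)\,(n,n-1,\dots,1)\,(\mathbf i^+(s)+1)\in\Sigma_{n+1}$ and $E_A(s)(\mathbf i):=(\mathbf i^-(s)+1)\,(1,2,\dots,n)\,\mathbf i^+(s)\in\Sigma_{n+1}$ (concatenations). Wiring diagram $G(\mathbf j)$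 for $\mathbf j\in\Sigma_{m+1}$: $m+1$ wires $\ell_1,\dots,\ell_{m+1}$ run top to bottom through positions $1,\dots,m+1$; at the top $\ell_k$ is in position $k$; the $j$-th node swaps the wires in positions $j_j, j_j+1$; at the bottom $\ell_k$ is in position $m+2-k$ and ends at $L_k$. Rigorous paths: for $k\in[m]$, $G(\mathbf j,k)$ has $\ell_1,\dots,\ell_k$ oriented upward and the rest downward. A rigorous path in $G(\mathbf j,k)$ starts at $L_k$, ends at $L_{k+1}$, moves along wires in their orientation, switches wires only at their crossing node, passes each node at most once, and never passes straight through $\ell_a\cap\ell_b$ while on $\ell_a$ when both are downward with $a>b$ or both upward with $a<b$. $\mathcal{GP}(\mathbf j)$ = set of all rigorous paths (all $k$). *)

theory Defs
  imports Main "HOL-Combinatorics.Transposition"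
begin

(* Product s_{i_1} ... s_{i_M} of simple transpositions s_i = (i, i+1), as a map on nat.
   Equivalently: word_perm (take t ws) p = the wire sitting in position p after the
   first t nodes of the wiring diagram. *)
definition word_perm :: "nat list \<Rightarrow> nat \<Rightarrow> nat" where
  "word_perm ws = foldl (\<lambda>f i. f \<circ> transpose i (Suc i)) id ws"

definition longest :: "nat \<Rightarrow> nat \<Rightarrow> nat" where
  "longest N p = (if 1 \<le> p \<and> p \<le> N then Suc N - p else p)"

(* Sigma N: reduced words of the longest element of S_N (N wires) *)
definition Sigma :: "nat \<Rightarrow> nat list set" where
  "Sigma N = {ws. length ws = N * (N - 1) div 2 \<and> set ws \<subseteq> {1..<N}
                 \<and> word_perm ws = longest N}"

(* Nodes of G(j) are indexed 0..<length j from top to bottom; node t swaps positions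
   j!t, j!t+1. The two wires crossing at node t: *)
definition wires_at :: "nat list \<Rightarrow> nat \<Rightarrow> nat set" where
  "wires_at j t = {word_perm (take t j) (j ! t), word_perm (take t j) (Suc (j ! t))}"

definition other_wire :: "nat list \<Rightarrow> nat \<Rightarrow> nat \<Rightarrow> nat" where
  "other_wire j t a = (if a = word_perm (take t j) (j ! t)
                        then word_perm (take t j) (Suc (j ! t))
                        else word_perm (take t j) (j ! t))"

(* In G(j,k) wire l_a is oriented upward iff a \<le> k. Next node reached when travelling along
   wire a in its orientation, coming from node prev (None = from the end point of the wire). *)
definition next_node :: "nat list \<Rightarrow> nat \<Rightarrow> nat \<Rightarrow> nat option \<Rightarrow> nat option" where
  "next_node j k a prev =
     (if a \<le> k then
        (let C = {t. t < length j \<and> a \<in> wires_at j t \<and>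
                     (case prev of None \<Rightarrow> True | Some p \<Rightarrow> t < p)}
         in if C = {} then None else Some (Max C))
      else
        (let C = {t. t < length j \<and> a \<in> wires_at j t \<and>
                     (case prev of None \<Rightarrow> True | Some p \<Rightarrow> p < t)}
         in if C = {} then None else Some (Min C)))"

definition forbidden_pass :: "nat list \<Rightarrow> nat \<Rightarrow> nat \<Rightarrow> nat \<Rightarrow> bool" where
  "forbidden_pass j k t a = (let b = other_wire j t a in
      (\<not> a \<le> k \<and> \<not> b \<le> k \<and> b < a) \<or> (a \<le> k \<and> b \<le> k \<and> a < b))"

(* A path is recorded as its start index k together with the list of nodes it traverses,
   each node t_i paired with the wire w_i on which it leaves t_i (w_0 = k). *)
type_synonym path = "nat \<times> (nat \<times> nat) list"

definition path_wires :: "path \<Rightarrow> nat list" where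
  "path_wires P = fst P # map snd (snd P)"

definition rigorous :: "nat list \<Rightarrow> nat \<Rightarrow> (nat \<times> nat) list \<Rightarrow> bool" where
  "rigorous j k ps =
    (let ws = k # map snd ps; ts = None # map (Some \<circ> fst) ps in
      (\<forall>i < length ps.
          next_node j k (ws ! i) (ts ! i) = Some (fst (ps ! i))
        \<and> snd (ps ! i) \<in> wires_at j (fst (ps ! i))
        \<and> (snd (ps ! i) = ws ! i \<longrightarrow> \<not> forbidden_pass j k (fst (ps ! i)) (ws ! i)))
      \<and> distinct (map fst ps)
      \<and> last ws = Suc k
      \<and> next_node j k (last ws) (last ts) = None)"

definition GP :: "nat \<Rightarrow> nat list \<Rightarrow> path set" where
  "GP N j = {(k, ps). 1 \<le> k \<and> k < N \<and> rigorous j k ps}"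

definition switches_at :: "path \<Rightarrow> nat \<Rightarrow> bool" where
  "switches_at P t = (\<exists>i < length (snd P). fst (snd P ! i) = t \<and>
                         snd (snd P ! i) \<noteq> path_wires P ! i)"

definition no_switch_on_wire :: "nat list \<Rightarrow> nat \<Rightarrow> path \<Rightarrow> bool" where
  "no_switch_on_wire j a P = (\<forall>t < length j. a \<in> wires_at j t \<longrightarrow> \<not> switches_at P t)"

datatype ext_kind = ExtD | ExtA

definition ext :: "ext_kind \<Rightarrow> nat \<Rightarrow> nat \<Rightarrow> nat list \<Rightarrow> nat list" where
  "ext b n s ws = (let M = n * (n - 1) div 2 in
     case b of
       ExtD \<Rightarrow> take (M - s) ws @ rev [1..<Suc n] @ map Suc (drop (M - s) ws)
     | ExtA \<Rightarrow> map Suc (take (M - s) ws) @ [1..<Suc n] @ drop (M - s) ws)"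

definition ext_wire :: "ext_kind \<Rightarrow> nat \<Rightarrow> nat" where
  "ext_wire b n = (case b of ExtD \<Rightarrow> Suc n | ExtA \<Rightarrow> 1)"

(* Restriction of a path of G(E_b(s)(i)) back to G(i): forget the nodes on l_b and
   relabel nodes and wires (used to pin down the canonical map). *)
definition restrict_path :: "ext_kind \<Rightarrow> nat \<Rightarrow> nat \<Rightarrow> nat list \<Rightarrow> path \<Rightarrow> path" where
  "restrict_path b n s j' P = (let M = n * (n - 1) div 2;
      node = (\<lambda>t. if t < M - s then t else t - n);
      wire = (\<lambda>w. case b of ExtD \<Rightarrow> w | ExtA \<Rightarrow> w - 1) in
    (wire (fst P),
     map (\<lambda>(t, w). (node t, wire w))
         (filter (\<lambda>(t, w). ext_wire b n \<notin> wires_at j' t) (snd P))))"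

end

theory Submission
  imports Defs
begin

text \<open>Inserting the block \<open>n, \<dots>, 1\<close> (resp. \<open>1, \<dots>, n\<close>) adds a new bottom wire \<open>\<ell>\<^sub>n\<^sub>+\<^sub>1\<close>
  (resp. top wire \<open>\<ell>\<^sub>1\<close>), and the nodes of \<open>G(E(s)(i))\<close> off that wire are exactly the nodes of
  \<open>G(i)\<close>, in the same order, with wire labels shifted by 0 (resp. 1). A rigorous path that never
  switches at a node of the new wire therefore runs straight through those nodes, and deleting
  them leaves a rigorous path of \<open>G(i)\<close>. Conversely, every rigorous path of \<open>G(i)\<close> lifts uniquely
  by running straight through the new nodes, which is never forbidden because the new wire is
  outermost. \<open>\<Psi>\<close> is the inverse of this restriction, and the count follows by splitting
  \<open>GP(E(s)(i))\<close> according to whether a path switches on the new wire.\<close>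

section \<open>Words and wiring diagrams\<close>

lemma foldl_transpose_comp:
  "foldl (\<lambda>f i. f \<circ> transpose i (Suc i)) (g :: nat \<Rightarrow> nat) ws
     = g \<circ> foldl (\<lambda>f i. f \<circ> transpose i (Suc i)) id ws"
proof (induction ws arbitrary: g)
  case (Cons x ws)
  show ?case
    using Cons.IH[of "g \<circ> transpose x (Suc x)"] Cons.IH[of "transpose x (Suc x)"] by (simp add: comp_assoc)
qed simp

lemma word_perm_Nil [simp]: "word_perm [] = id"
  by (simp add: word_perm_def)

lemma word_perm_Cons: "word_perm (x # xs) = transpose x (Suc x) \<circ> word_perm xs"
  unfolding word_perm_def by (simp add: foldl_transpose_comp[where g = "transpose x (Suc x)"])

lemma word_perm_append: "word_perm (xs @ ys) = word_perm xs \<circ> word_perm ys"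
  unfolding word_perm_def by (simp add: foldl_transpose_comp[where g = "foldl _ id xs"])

definition shift_perm :: "(nat \<Rightarrow> nat) \<Rightarrow> nat \<Rightarrow> nat" where
  "shift_perm f q = (if q = 0 then 0 else Suc (f (q - 1)))"

lemma shift_perm_0 [simp]: "shift_perm f 0 = 0"
  and shift_perm_Suc [simp]: "shift_perm f (Suc q) = Suc (f q)"
  by (simp_all add: shift_perm_def)

lemma word_perm_map_Suc: "word_perm (map Suc ys) = shift_perm (word_perm ys)"
proof (induction ys)
  case (Cons x ys)
  show ?case
  proof
    fix q
    show "word_perm (map Suc (x # ys)) q = shift_perm (word_perm (x # ys)) q"
      using Cons.IH by (cases q) (simp_all add: word_perm_Cons transpose_def)
  qed
qed (simp add: fun_eq_iff shift_perm_def)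

lemma word_perm_in_range:
  "set xs \<subseteq> {1..<n} \<Longrightarrow> 1 \<le> q \<Longrightarrow> q \<le> n \<Longrightarrow> 1 \<le> word_perm xs q \<and> word_perm xs q \<le> n"
  by (induction xs) (auto simp: word_perm_Cons transpose_def)

lemma word_perm_fixes_outside: "set xs \<subseteq> {1..<n} \<Longrightarrow> q = 0 \<or> n < q \<Longrightarrow> word_perm xs q = q"
  by (induction xs) (auto simp: word_perm_Cons transpose_def)

lemma word_perm_rev_upt:
  "m \<le> Suc n \<Longrightarrow> word_perm (rev [m..<Suc n]) q =
     (if q = m then Suc n else if m < q \<and> q \<le> Suc n then q - 1 else q)"
proof (induction "Suc n - m" arbitrary: m q)
  case (Suc d)
  then have "m \<le> n" by arith
  then have "[m..<Suc n] = m # [Suc m..<Suc n]" by (simp add: upt_rec)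
  then have "word_perm (rev [m..<Suc n]) q = word_perm (rev [Suc m..<Suc n]) (transpose m (Suc m) q)"
    by (simp del: upt_Suc add: word_perm_append word_perm_Cons)
  with Suc.hyps \<open>m \<le> n\<close> show ?case by (simp del: upt_Suc add: transpose_def)
qed auto

lemma word_perm_upt:
  "word_perm [1..<Suc r] q = (if q = Suc r then 1 else if 1 \<le> q \<and> q \<le> r then Suc q else q)"
proof (induction r arbitrary: q)
  case (Suc r)
  have "[1..<Suc (Suc r)] = [1..<Suc r] @ [Suc r]" by simp
  then have "word_perm [1..<Suc (Suc r)] q = word_perm [1..<Suc r] (transpose (Suc r) (Suc (Suc r)) q)"
    by (simp del: upt_Suc add: word_perm_append word_perm_Cons)
  with Suc show ?case by (simp del: upt_Suc add: transpose_def)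
qed simp

lemma wires_at_subset: "set j \<subseteq> {1..<K} \<Longrightarrow> t < length j \<Longrightarrow> wires_at j t \<subseteq> {1..K}"
proof -
  assume j: "set j \<subseteq> {1..<K}" and t: "t < length j"
  have "1 \<le> j ! t" "j ! t < K" using j t nth_mem by fastforce+
  moreover have "set (take t j) \<subseteq> {1..<K}" using j set_take_subset by fast
  ultimately show ?thesis
    unfolding wires_at_def using word_perm_in_range[of "take t j" K] by auto
qed

lemma other_wire_eq: "a \<in> wires_at j u \<Longrightarrow> w \<in> wires_at j u \<Longrightarrow> a \<noteq> w \<Longrightarrow> other_wire j u a = w"
  by (auto simp: wires_at_def other_wire_def)

lemma word_perm_rev_upt_Suc: "1 \<le> x \<Longrightarrow> x \<le> n \<Longrightarrow> word_perm (rev [1..<Suc n]) (Suc x) = x"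
  using word_perm_rev_upt[of 1 n "Suc x"] by (simp del: upt_Suc)

lemma word_perm_upt_Suc: "1 \<le> x \<Longrightarrow> x \<le> n \<Longrightarrow> word_perm [1..<Suc n] x = Suc x"
  using word_perm_upt[of n x] by (simp del: upt_Suc)

lemma take_rev_upt: "r \<le> n \<Longrightarrow> take r (rev [1..<Suc n]) = rev [Suc n - r..<Suc n]"
proof -
  assume r: "r \<le> n"
  have "[1..<Suc n] = [1..<Suc n - r] @ [Suc n - r..<Suc n]"
    using upt_add_eq_append[of 1 "Suc n - r" r] r by (simp add: Suc_diff_le del: upt_Suc)
  then show ?thesis using r by (simp del: upt_Suc)
qed

lemma rev_upt_nth: "r < n \<Longrightarrow> rev [1..<Suc n] ! r = n - r"
  by (simp add: rev_nth del: upt_Suc)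

lemma triangle_Suc: "Suc n * (Suc n - 1) div 2 = n * (n - 1) div 2 + n"
proof -
  have "Suc n * n = n * (n - 1) + 2 * n" by (cases n) (simp_all add: algebra_simps)
  then show ?thesis by simp
qed

section \<open>Rigorous paths as walks\<close>

fun walk :: "nat list \<Rightarrow> nat \<Rightarrow> nat \<Rightarrow> nat option \<Rightarrow> (nat \<times> nat) list \<Rightarrow> bool" where
  "walk j k a prev [] \<longleftrightarrow> a = Suc k \<and> next_node j k a prev = None"
| "walk j k a prev ((t, w) # ps) \<longleftrightarrow> next_node j k a prev = Some t \<and> w \<in> wires_at j t
      \<and> (w = a \<longrightarrow> \<not> forbidden_pass j k t a) \<and> walk j k w (Some t) ps"

lemma rigorous_conditions_iff_walk:
  "((\<forall>i < length ps.
        next_node j k ((a # map snd ps) ! i) ((prev # map (Some \<circ> fst) ps) ! i) = Some (fst (ps ! i))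
      \<and> snd (ps ! i) \<in> wires_at j (fst (ps ! i))
      \<and> (snd (ps ! i) = (a # map snd ps) ! i
           \<longrightarrow> \<not> forbidden_pass j k (fst (ps ! i)) ((a # map snd ps) ! i)))
    \<and> last (a # map snd ps) = Suc k
    \<and> next_node j k (last (a # map snd ps)) (last (prev # map (Some \<circ> fst) ps)) = None)
   \<longleftrightarrow> walk j k a prev ps"
proof (induction ps arbitrary: a prev)
  case (Cons x ps)
  obtain t w where x: "x = (t, w)" by (cases x)
  show ?case using Cons[of w "Some t"] unfolding x
    by (simp add: All_less_Suc2 del: last.simps) (auto simp: last_ConsR)
qed simp

lemma rigorous_iff_walk: "rigorous j k ps \<longleftrightarrow> walk j k k None ps \<and> distinct (map fst ps)"
  unfolding rigorous_def Let_def using rigorous_conditions_iff_walk[of ps j k k None] by auto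

definition ahead :: "bool \<Rightarrow> nat option \<Rightarrow> nat \<Rightarrow> bool" where
  "ahead up prev t = (case prev of None \<Rightarrow> True | Some p \<Rightarrow> (if up then t < p else p < t))"

lemma ahead_trans: "ahead up (Some y) z \<Longrightarrow> ahead up prev y \<Longrightarrow> ahead up prev z"
  by (cases prev) (auto simp: ahead_def split: if_splits)

lemma not_ahead_self [simp]: "\<not> ahead up (Some y) y"
  by (simp add: ahead_def)

definition candidates :: "nat list \<Rightarrow> bool \<Rightarrow> nat \<Rightarrow> nat option \<Rightarrow> nat set" where
  "candidates j up a prev = {t. t < length j \<and> a \<in> wires_at j t \<and> ahead up prev t}"

lemma finite_candidates [simp]: "finite (candidates j up a prev)"
  by (rule finite_subset[of _ "{..<length j}"]) (auto simp: candidates_def)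

lemma card_candidates_le: "card (candidates j up a prev) \<le> length j"
  using card_mono[of "{..<length j}" "candidates j up a prev"] by (auto simp: candidates_def)

lemma next_node_eq_candidates:
  "next_node j k a prev =
    (if candidates j (a \<le> k) a prev = {} then None
     else Some (if a \<le> k then Max (candidates j (a \<le> k) a prev) else Min (candidates j (a \<le> k) a prev)))"
  by (cases prev) (auto simp: next_node_def candidates_def ahead_def Let_def)

lemma next_node_SomeD:
  assumes "next_node j k a prev = Some y"
  shows "y \<in> candidates j (a \<le> k) a prev"
    and "z \<in> candidates j (a \<le> k) a prev \<Longrightarrow> (if a \<le> k then z \<le> y else y \<le> z)"
proof -
  let ?C = "candidates j (a \<le> k) a prev"
  have "?C \<noteq> {}" and y: "y = (if a \<le> k then Max ?C else Min ?C)"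
    using assms unfolding next_node_eq_candidates by (auto split: if_splits)
  then show "y \<in> ?C" using Max_in[OF finite_candidates] Min_in[OF finite_candidates] by (cases "a \<le> k") simp_all
  show "z \<in> ?C \<Longrightarrow> (if a \<le> k then z \<le> y else y \<le> z)" using y by auto
qed

lemma next_node_NoneD: "next_node j k a prev = None \<Longrightarrow> candidates j (a \<le> k) a prev = {}"
  unfolding next_node_eq_candidates by (auto split: if_splits)

lemma candidates_next_node_psubset:
  assumes "next_node j k a prev = Some y"
  shows "candidates j (a \<le> k) a (Some y) \<subset> candidates j (a \<le> k) a prev"
proof -
  have "y \<in> candidates j (a \<le> k) a prev" using next_node_SomeD(1)[OF assms] .
  moreover have "y \<notin> candidates j (a \<le> k) a (Some y)" by (simp add: candidates_def)
  moreover have "candidates j (a \<le> k) a (Some y) \<subseteq> candidates j (a \<le> k) a prev"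
    using calculation(1) ahead_trans[of "a \<le> k" y _ prev] by (auto simp: candidates_def)
  ultimately show ?thesis by blast
qed

lemma walk_node_wire: "walk j k a prev ps \<Longrightarrow> (t, w) \<in> set ps \<Longrightarrow> t < length j \<and> w \<in> wires_at j t"
proof (induction ps arbitrary: a prev)
  case (Cons x ps)
  obtain t' w' where x: "x = (t', w')" by (cases x)
  show ?case using Cons next_node_SomeD(1)[of j k a prev t'] unfolding x by (auto simp: candidates_def)
qed simp

lemma finite_GP: "finite (GP K j)"
proof -
  define W where "W = (\<Union>t<length j. wires_at j t)"
  define L where "L = {ps. set ps \<subseteq> {..<length j} \<times> W \<and> length ps \<le> length j}"
  have "GP K j \<subseteq> {..<K} \<times> L"
  proof
    fix P assume "P \<in> GP K j"
    then obtain k ps where P: "P = (k, ps)" "k < K" "walk j k k None ps" "distinct (map fst ps)"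
      by (auto simp: GP_def rigorous_iff_walk)
    have nodes: "set ps \<subseteq> {..<length j} \<times> W"
      using walk_node_wire[OF P(3)] unfolding W_def by fastforce
    then have "set (map fst ps) \<subseteq> {..<length j}" by auto
    then have "length ps \<le> length j"
      using card_mono[of "{..<length j}" "set (map fst ps)"] distinct_card[OF P(4)] by simp
    with P nodes show "P \<in> {..<K} \<times> L" by (simp add: L_def)
  qed
  moreover have "finite W" unfolding W_def wires_at_def by simp
  then have "finite L" unfolding L_def using finite_lists_length_le[of "{..<length j} \<times> W"] by simp
  ultimately show ?thesis by (simp add: finite_subset)
qed

fun no_switch_walk :: "nat list \<Rightarrow> nat \<Rightarrow> nat \<Rightarrow> (nat \<times> nat) list \<Rightarrow> bool" where
  "no_switch_walk j c a [] \<longleftrightarrow> True"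
| "no_switch_walk j c a ((t, w) # ps) \<longleftrightarrow> (c \<in> wires_at j t \<longrightarrow> w = a) \<and> no_switch_walk j c w ps"

lemma no_switch_walk_iff_nth:
  "no_switch_walk j c a ps \<longleftrightarrow>
     (\<forall>i < length ps. c \<in> wires_at j (fst (ps ! i)) \<longrightarrow> snd (ps ! i) = (a # map snd ps) ! i)"
proof (induction ps arbitrary: a)
  case (Cons x ps)
  obtain t w where x: "x = (t, w)" by (cases x)
  show ?case using Cons unfolding x by (simp add: All_less_Suc2)
qed simp

lemma no_switch_on_wire_iff_walk:
  assumes "walk j k' a prev ps"
  shows "no_switch_on_wire j c (k, ps) \<longleftrightarrow> no_switch_walk j c k ps"
proof -
  have "no_switch_on_wire j c (k, ps) \<longleftrightarrow>
     (\<forall>i < length ps. c \<in> wires_at j (fst (ps ! i)) \<longrightarrow> snd (ps ! i) = (k # map snd ps) ! i)"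
    unfolding no_switch_on_wire_def switches_at_def path_wires_def
  proof (auto, goal_cases)
    case (1 i)
    then show ?case using walk_node_wire[OF assms, of "fst (ps ! i)" "snd (ps ! i)"] nth_mem by fastforce
  qed
  then show ?thesis by (simp add: no_switch_walk_iff_nth)
qed

text \<open>At a node of \<open>c\<close> the walk keeps its wire, and at any other node neither wire is \<open>c\<close>.\<close>
lemma no_switch_walk_end:
  "walk j k a prev ps \<Longrightarrow> no_switch_walk j c a ps \<Longrightarrow> Suc k = c \<longleftrightarrow> a = c"
proof (induction ps arbitrary: a prev)
  case (Cons x ps)
  obtain t v where x: "x = (t, v)" by (cases x)
  have "a \<in> wires_at j t" using Cons.prems(1) next_node_SomeD(1)[of j k a prev t]
    unfolding x by (simp add: candidates_def)
  then have "v = c \<longleftrightarrow> a = c" using Cons.prems unfolding x by (cases "c \<in> wires_at j t") auto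
  then show ?case using Cons.IH[of v "Some t"] Cons.prems unfolding x by simp
qed simp

section \<open>Inserting a wire into a wiring diagram\<close>

text \<open>\<open>J\<close> arises from \<open>I\<close> by inserting the wire \<open>extra\<close> at the bottom (\<open>c = 0\<close>) or at the
  top (\<open>c = 1\<close>): node \<open>t\<close> of \<open>I\<close> reappears as \<open>emb t\<close> with its wire labels shifted by \<open>c\<close>,
  \<open>node\<close> undoes \<open>emb\<close>, and every other node of \<open>J\<close> lies on \<open>extra\<close>.\<close>
locale diagram_embedding =
  fixes I J :: "nat list" and emb node :: "nat \<Rightarrow> nat" and c N extra :: nat
  assumes emb_mono: "\<And>t1 t2. t1 < t2 \<Longrightarrow> t2 < length I \<Longrightarrow> emb t1 < emb t2"
    and emb_less_length: "\<And>t. t < length I \<Longrightarrow> emb t < length J"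
    and node_emb: "\<And>t. t < length I \<Longrightarrow> node (emb t) = t"
    and extra_iff_not_emb: "\<And>y. y < length J \<Longrightarrow> extra \<notin> wires_at J y \<longleftrightarrow> (\<exists>t<length I. y = emb t)"
    and emb_wire_pos: "\<And>t. t < length I \<Longrightarrow>
          word_perm (take (emb t) J) (J ! emb t) = word_perm (take t I) (I ! t) + c"
    and emb_wire_Suc_pos: "\<And>t. t < length I \<Longrightarrow>
          word_perm (take (emb t) J) (Suc (J ! emb t)) = word_perm (take t I) (Suc (I ! t)) + c"
    and wires_at_I: "\<And>t. t < length I \<Longrightarrow> wires_at I t \<subseteq> {1..N}"
    and extra_wire: "c = 0 \<and> extra = Suc N \<or> c = 1 \<and> extra = 1"
    and extra_node_not_forbidden: "\<And>u a k. u < length J \<Longrightarrow> extra \<in> wires_at J u \<Longrightarrow>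
          a \<in> wires_at J u \<Longrightarrow> a \<noteq> extra \<Longrightarrow> 1 \<le> k \<Longrightarrow> k < N \<Longrightarrow> \<not> forbidden_pass J (k + c) u a"
begin

lemma emb_le_iff: "t1 < length I \<Longrightarrow> t2 < length I \<Longrightarrow> emb t1 \<le> emb t2 \<longleftrightarrow> t1 \<le> t2"
  by (metis emb_mono le_less not_less order_less_asym')

lemma wires_at_emb: "t < length I \<Longrightarrow> wires_at J (emb t) = (\<lambda>x. x + c) ` wires_at I t"
  unfolding wires_at_def using emb_wire_pos emb_wire_Suc_pos by simp

lemma forbidden_pass_emb: "t < length I \<Longrightarrow> a \<in> wires_at I t \<Longrightarrow>
   forbidden_pass J (k + c) (emb t) (a + c) \<longleftrightarrow> forbidden_pass I k t a"
  unfolding forbidden_pass_def other_wire_def Let_def using emb_wire_pos emb_wire_Suc_pos by simp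

lemma extra_not_at_emb: "t < length I \<Longrightarrow> extra \<notin> wires_at J (emb t)"
  using extra_iff_not_emb[OF emb_less_length] by blast

lemma shift_ne_extra: "1 \<le> a \<Longrightarrow> a \<le> N \<Longrightarrow> a + c \<noteq> extra"
  using extra_wire by auto

lemma extra_node_wire_unique:
  "x \<in> wires_at J y \<Longrightarrow> z \<in> wires_at J y \<Longrightarrow> extra \<in> wires_at J y \<Longrightarrow> x \<noteq> extra \<Longrightarrow> z \<noteq> extra \<Longrightarrow> x = z"
  by (auto simp: wires_at_def)

text \<open>\<open>pI\<close> and \<open>pJ\<close> are the last nodes visited in \<open>I\<close> and in \<open>J\<close> (\<open>None\<close> at the start); the
  walks along \<open>a\<close> and \<open>a + c\<close> are synchronized when the same old nodes still lie ahead.\<close>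
definition synchronized :: "nat \<Rightarrow> nat \<Rightarrow> nat option \<Rightarrow> nat option \<Rightarrow> bool" where
  "synchronized k a pI pJ \<longleftrightarrow>
     (\<forall>t<length I. a \<in> wires_at I t \<longrightarrow> ahead (a \<le> k) pJ (emb t) = ahead (a \<le> k) pI t)"

definition valid_origin :: "nat \<Rightarrow> nat option \<Rightarrow> bool" where
  "valid_origin a pI \<longleftrightarrow> (case pI of None \<Rightarrow> True | Some p \<Rightarrow> p < length I \<and> a \<in> wires_at I p)"

lemma synchronized_None: "synchronized k a None None"
  by (simp add: synchronized_def ahead_def)

lemma synchronized_emb: "t0 < length I \<Longrightarrow> synchronized k a (Some t0) (Some (emb t0))"
  unfolding synchronized_def ahead_def using emb_mono by (auto simp: linorder_not_le[symmetric] emb_le_iff)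

lemma synchronized_unique:
  assumes "synchronized k a p1 Y" "synchronized k a p2 Y" "valid_origin a p1" "valid_origin a p2"
  shows "p1 = p2"
proof (cases p1; cases p2)
  fix q1 q2 assume p: "p1 = Some q1" "p2 = Some q2"
  then have "q1 < length I" "a \<in> wires_at I q1" "q2 < length I" "a \<in> wires_at I q2"
    using assms(3,4) by (auto simp: valid_origin_def)
  then have "ahead (a \<le> k) (Some q1) q2 = ahead (a \<le> k) (Some q2) q2"
    "ahead (a \<le> k) (Some q1) q1 = ahead (a \<le> k) (Some q2) q1"
    using assms(1,2) p unfolding synchronized_def by auto
  then show "p1 = p2" using p by (auto simp: ahead_def split: if_splits)
qed (use assms in \<open>auto simp: synchronized_def valid_origin_def ahead_def\<close>)

definition restrict_nodes :: "(nat \<times> nat) list \<Rightarrow> (nat \<times> nat) list" where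
  "restrict_nodes ps = map (\<lambda>(t, w). (node t, w - c)) (filter (\<lambda>(t, w). extra \<notin> wires_at J t) ps)"

definition restrict :: "path \<Rightarrow> path" where
  "restrict P = (fst P - c, restrict_nodes (snd P))"

lemma restrict_nodes_Nil [simp]: "restrict_nodes [] = []"
  by (simp add: restrict_nodes_def)

lemma restrict_nodes_Cons:
  "restrict_nodes ((y, w) # ps) = (if extra \<in> wires_at J y then restrict_nodes ps else (node y, w - c) # restrict_nodes ps)"
  by (simp add: restrict_nodes_def)

lemma candidates_old:
  assumes "synchronized k a pI pJ"
  shows "{y \<in> candidates J (a \<le> k) (a + c) pJ. extra \<notin> wires_at J y} = emb ` candidates I (a \<le> k) a pI"
proof (intro equalityI subsetI)
  fix y assume "y \<in> {y \<in> candidates J (a \<le> k) (a + c) pJ. extra \<notin> wires_at J y}"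
  then have y: "y < length J" "a + c \<in> wires_at J y" "ahead (a \<le> k) pJ y" "extra \<notin> wires_at J y"
    by (auto simp: candidates_def)
  then obtain t where t: "t < length I" "y = emb t" using extra_iff_not_emb by blast
  then show "y \<in> emb ` candidates I (a \<le> k) a pI"
    using y assms wires_at_emb[OF t(1)] by (auto simp: candidates_def synchronized_def)
next
  fix y assume "y \<in> emb ` candidates I (a \<le> k) a pI"
  then obtain t where "t < length I" "a \<in> wires_at I t" "ahead (a \<le> k) pI t" "y = emb t"
    by (auto simp: candidates_def)
  then show "y \<in> {y \<in> candidates J (a \<le> k) (a + c) pJ. extra \<notin> wires_at J y}"
    using assms emb_less_length wires_at_emb extra_not_at_emb by (auto simp: candidates_def synchronized_def)
qed

lemma next_node_None_restrict:
  "synchronized k a pI pJ \<Longrightarrow> next_node J (k + c) (a + c) pJ = None \<Longrightarrow> next_node I k a pI = None"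
  using candidates_old[of k a pI pJ] next_node_NoneD[of J "k + c" "a + c" pJ]
  by (auto simp: next_node_eq_candidates[of I])

lemma next_node_old:
  assumes sync: "synchronized k a pI pJ" and nx: "next_node J (k + c) (a + c) pJ = Some y"
    and old: "extra \<notin> wires_at J y"
  shows "\<exists>t<length I. y = emb t \<and> next_node I k a pI = Some t"
proof -
  let ?C = "candidates I (a \<le> k) a pI"
  have extreme: "(if a \<le> k then z \<le> y else y \<le> z)" if "z \<in> candidates J (a \<le> k) (a + c) pJ" for z
  proof -
    have "z \<in> candidates J (a + c \<le> k + c) (a + c) pJ" using that by simp
    from next_node_SomeD(2)[OF nx this] show ?thesis by simp
  qed
  have "y \<in> emb ` ?C" using candidates_old[OF sync] next_node_SomeD(1)[OF nx] old by auto
  then obtain t where t: "t \<in> ?C" "y = emb t" by blast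
  have tl: "t < length I" using t by (auto simp: candidates_def)
  have bound: "(if a \<le> k then x \<le> t else t \<le> x)" if "x \<in> ?C" for x
  proof -
    have "x < length I" using that by (auto simp: candidates_def)
    moreover have "emb x \<in> candidates J (a \<le> k) (a + c) pJ" using candidates_old[OF sync] that by blast
    ultimately show ?thesis using extreme[of "emb x"] t(2) emb_le_iff tl by (simp split: if_splits)
  qed
  have "next_node I k a pI = Some t"
  proof (cases "a \<le> k")
    case True
    then have "Max ?C = t" using t bound by (intro Max_eqI) auto
    then show ?thesis unfolding next_node_eq_candidates using t True by auto
  next
    case False
    then have "Min ?C = t" using t bound by (intro Min_eqI) auto
    then show ?thesis unfolding next_node_eq_candidates using t False by auto
  qed
  then show ?thesis using t tl by blast
qed

lemma synchronized_next_extra: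
  assumes sync: "synchronized k a pI pJ" and nx: "next_node J (k + c) (a + c) pJ = Some y"
    and new: "extra \<in> wires_at J y"
  shows "synchronized k a pI (Some y)"
  unfolding synchronized_def
proof (intro allI impI)
  fix t assume t: "t < length I" "a \<in> wires_at I t"
  have y: "ahead (a \<le> k) pJ y" using next_node_SomeD(1)[OF nx] by (simp add: candidates_def)
  have sync_t: "ahead (a \<le> k) pJ (emb t) = ahead (a \<le> k) pI t" using sync t by (simp add: synchronized_def)
  show "ahead (a \<le> k) (Some y) (emb t) = ahead (a \<le> k) pI t"
  proof
    assume "ahead (a \<le> k) (Some y) (emb t)"
    then show "ahead (a \<le> k) pI t" using ahead_trans y sync_t by blast
  next
    assume "ahead (a \<le> k) pI t"
    then have "emb t \<in> candidates J (a \<le> k) (a + c) pJ"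
      using sync_t t emb_less_length wires_at_emb by (auto simp: candidates_def)
    then have "emb t \<in> candidates J (a + c \<le> k + c) (a + c) pJ" by simp
    from next_node_SomeD(2)[OF nx this] have "if a \<le> k then emb t \<le> y else y \<le> emb t" by simp
    moreover have "emb t \<noteq> y" using extra_not_at_emb[OF t(1)] new by auto
    ultimately show "ahead (a \<le> k) (Some y) (emb t)" by (auto simp: ahead_def split: if_splits)
  qed
qed

lemma non_switching_step_cases:
  assumes walk: "walk J (k + c) (a + c) pJ ((y, w) # ps)"
    and no_switch: "no_switch_walk J extra (a + c) ((y, w) # ps)" and sync: "synchronized k a pI pJ"
  obtains (extra_node) "extra \<in> wires_at J y" "w = a + c" "synchronized k a pI (Some y)"
      "restrict_nodes ((y, w) # ps) = restrict_nodes ps"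
  | (old_node) t w0 where "t < length I" "y = emb t" "next_node I k a pI = Some t" "w0 \<in> wires_at I t"
      "w = w0 + c" "restrict_nodes ((y, w) # ps) = (t, w0) # restrict_nodes ps"
proof (cases "extra \<in> wires_at J y")
  case True
  then show ?thesis
    using extra_node walk no_switch synchronized_next_extra[OF sync _ True] by (simp add: restrict_nodes_Cons)
next
  case False
  have nx: "next_node J (k + c) (a + c) pJ = Some y" and "w \<in> wires_at J y" using walk by auto
  obtain t where t: "t < length I" "y = emb t" "next_node I k a pI = Some t"
    using next_node_old[OF sync nx False] by blast
  moreover obtain w0 where "w0 \<in> wires_at I t" "w = w0 + c"
    using \<open>w \<in> wires_at J y\<close> wires_at_emb[OF t(1)] t(2) by auto
  ultimately show ?thesis using old_node False node_emb by (simp add: restrict_nodes_Cons)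
qed

lemma restrict_walk:
  "walk J (k + c) (a + c) pJ ps \<Longrightarrow> no_switch_walk J extra (a + c) ps \<Longrightarrow> synchronized k a pI pJ
    \<Longrightarrow> walk I k a pI (restrict_nodes ps)"
proof (induction ps arbitrary: a pI pJ)
  case Nil
  then show ?case using next_node_None_restrict by auto
next
  case (Cons x ps)
  obtain y w where x: "x = (y, w)" by (cases x)
  have pass: "w = a + c \<longrightarrow> \<not> forbidden_pass J (k + c) y (a + c)"
    and rest: "walk J (k + c) w (Some y) ps" "no_switch_walk J extra w ps"
    using Cons.prems(1,2) unfolding x by auto
  from Cons.prems[unfolded x] show ?case
  proof (cases rule: non_switching_step_cases)
    case extra_node
    then show ?thesis using Cons.IH[of a "Some y" pI] rest unfolding x by simp
  next
    case (old_node t w0)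
    have "a \<in> wires_at I t" using next_node_SomeD(1)[OF old_node(3)] by (simp add: candidates_def)
    then have "w0 = a \<longrightarrow> \<not> forbidden_pass I k t a"
      using pass old_node forbidden_pass_emb[OF old_node(1)] by simp
    moreover have "walk I k w0 (Some t) (restrict_nodes ps)"
      using Cons.IH[of w0 "Some (emb t)" "Some t"] rest synchronized_emb[OF old_node(1)] old_node by simp
    ultimately show ?thesis using old_node unfolding x by simp
  qed
qed

text \<open>A visit to a node of the extra wire is traced back to the old node (or the start) from which
  the walk last set out along its wire; by \<open>synchronized_unique\<close> this origin is
  determined by the node, which is why lifted walks pass each node at most once.\<close>
lemma extra_visit_origin:
  assumes "walk J (k + c) (a0 + c) pJ ps" "no_switch_walk J extra (a0 + c) ps" "synchronized k a0 pI pJ"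
    "valid_origin a0 pI" "1 \<le> a0" "a0 \<le> N" "(y, w) \<in> set ps" "extra \<in> wires_at J y"
  shows "\<exists>a p. w = a + c \<and> 1 \<le> a \<and> a \<le> N \<and> valid_origin a p \<and> synchronized k a p (Some y)
    \<and> (p = pI \<and> a = a0 \<and> ahead (a0 \<le> k) pJ y \<or> p \<in> Some ` fst ` set (restrict_nodes ps))"
  using assms
proof (induction ps arbitrary: a0 pI pJ)
  case (Cons x ps)
  obtain y1 w1 where x: "x = (y1, w1)" by (cases x)
  have rest: "walk J (k + c) w1 (Some y1) ps" "no_switch_walk J extra w1 ps"
    and ahead_y1: "ahead (a0 \<le> k) pJ y1"
    using Cons.prems(1,2) next_node_SomeD(1)[of J "k + c" "a0 + c" pJ y1] unfolding x
    by (auto simp: candidates_def)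
  from Cons.prems(1-3)[unfolded x] show ?case
  proof (cases rule: non_switching_step_cases)
    case extra_node
    show ?thesis
    proof (cases "(y, w) = (y1, w1)")
      case True
      then show ?thesis using Cons.prems(4-6) extra_node ahead_y1 by blast
    next
      case False
      then have "(y, w) \<in> set ps" using Cons.prems(7) unfolding x by auto
      from Cons.IH[OF rest[unfolded extra_node(2)] extra_node(3) Cons.prems(4-6) this Cons.prems(8)]
      obtain a p where "w = a + c" "1 \<le> a" "a \<le> N" "valid_origin a p" "synchronized k a p (Some y)"
        and "p = pI \<and> a = a0 \<and> ahead (a0 \<le> k) (Some y1) y \<or> p \<in> Some ` fst ` set (restrict_nodes ps)"
        by blast
      then show ?thesis using extra_node(4) ahead_trans[of "a0 \<le> k" y1 y pJ] ahead_y1 unfolding x by auto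
    qed
  next
    case (old_node t w0)
    have "(y, w) \<in> set ps" using Cons.prems(7,8) old_node(2) extra_not_at_emb[OF old_node(1)] unfolding x by auto
    moreover have "valid_origin w0 (Some t)" "1 \<le> w0" "w0 \<le> N"
      using old_node(1,4) wires_at_I[OF old_node(1)] by (auto simp: valid_origin_def)
    ultimately obtain a p where "w = a + c" "1 \<le> a" "a \<le> N" "valid_origin a p" "synchronized k a p (Some y)"
      and "p = Some t \<or> p \<in> Some ` fst ` set (restrict_nodes ps)"
      using Cons.IH[of w0 "Some (emb t)" "Some t"] rest old_node synchronized_emb[OF old_node(1)] Cons.prems(8)
      by blast
    then show ?thesis using old_node(6) unfolding x by auto
  qed
qed simp

lemma extra_node_not_revisited:
  assumes walk: "walk J (k + c) (a0 + c) (Some y) ps" and "no_switch_walk J extra (a0 + c) ps"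
    and sync: "synchronized k a0 pI (Some y)" and "valid_origin a0 pI" "1 \<le> a0" "a0 \<le> N"
    and y: "extra \<in> wires_at J y" "a0 + c \<in> wires_at J y"
    and "pI \<notin> Some ` fst ` set (restrict_nodes ps)"
  shows "y \<notin> fst ` set ps"
proof
  assume "y \<in> fst ` set ps"
  then obtain w where w: "(y, w) \<in> set ps" by force
  from extra_visit_origin[OF assms(1-6) w y(1)]
  obtain a p where p: "w = a + c" "1 \<le> a" "a \<le> N" "valid_origin a p" "synchronized k a p (Some y)"
    "p \<in> Some ` fst ` set (restrict_nodes ps)" by auto
  have "w \<in> wires_at J y" using walk_node_wire[OF walk w] by simp
  then have "a = a0" using extra_node_wire_unique[OF _ y(2,1)] p(1-3) shift_ne_extra assms(5,6) by fastforce
  then have "p = pI" using synchronized_unique[of k a0 p "Some y" pI] p(4,5) sync assms(4) by simp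
  then show False using p(6) assms(9) by simp
qed

lemma distinct_if_restrict_nodes_distinct:
  assumes "walk J (k + c) (a0 + c) pJ ps" "no_switch_walk J extra (a0 + c) ps" "synchronized k a0 pI pJ"
    "valid_origin a0 pI" "1 \<le> a0" "a0 \<le> N" "distinct (map fst (restrict_nodes ps))"
    "pI \<notin> Some ` fst ` set (restrict_nodes ps)"
  shows "distinct (map fst ps)"
  using assms
proof (induction ps arbitrary: a0 pI pJ)
  case (Cons x ps)
  obtain y w where x: "x = (y, w)" by (cases x)
  have wy: "w \<in> wires_at J y" and rest: "walk J (k + c) w (Some y) ps" "no_switch_walk J extra w ps"
    using Cons.prems(1,2) unfolding x by auto
  from Cons.prems(1-3)[unfolded x] show ?case
  proof (cases rule: non_switching_step_cases)
    case extra_node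
    have "y \<notin> fst ` set ps"
      using extra_node_not_revisited[OF rest[unfolded extra_node(2)] extra_node(3) Cons.prems(4-6) extra_node(1)]
        wy extra_node(2,4) Cons.prems(8) unfolding x by simp
    then show ?thesis
      using Cons.IH[OF rest[unfolded extra_node(2)] extra_node(3) Cons.prems(4-6)] Cons.prems(7,8) extra_node(4)
      unfolding x by simp
  next
    case (old_node t w0)
    have "y \<notin> fst ` set ps"
    proof
      assume "y \<in> fst ` set ps"
      then obtain w' where "(y, w') \<in> set ps" by force
      then have "(t, w' - c) \<in> set (restrict_nodes ps)"
        using old_node(1,2) extra_not_at_emb node_emb by (force simp: restrict_nodes_def)
      then show False using Cons.prems(7) old_node(6) unfolding x by force
    qed
    moreover have "valid_origin w0 (Some t)" "1 \<le> w0" "w0 \<le> N"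
      using old_node(1,4) wires_at_I[OF old_node(1)] by (auto simp: valid_origin_def)
    ultimately show ?thesis
      using Cons.IH[of w0 "Some (emb t)" "Some t"] rest old_node synchronized_emb[OF old_node(1)] Cons.prems(7)
      unfolding x by (simp add: inj_image_mem_iff[OF inj_Some])
  qed
qed simp

lemma restrict_nodes_inj:
  "walk J k' a pJ ps1 \<Longrightarrow> walk J k' a pJ ps2 \<Longrightarrow> no_switch_walk J extra a ps1 \<Longrightarrow> no_switch_walk J extra a ps2
    \<Longrightarrow> restrict_nodes ps1 = restrict_nodes ps2 \<Longrightarrow> ps1 = ps2"
proof (induction ps1 arbitrary: a pJ ps2)
  case Nil
  then show ?case by (cases ps2) auto
next
  case (Cons x1 rest1)
  obtain y w1 where x1: "x1 = (y, w1)" by (cases x1)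
  obtain y2 w2 rest2 where ps2: "ps2 = (y2, w2) # rest2"
    using Cons.prems(1,2) unfolding x1 by (cases ps2) auto
  have "y2 = y" using Cons.prems(1,2) unfolding x1 ps2 by simp
  have w: "w1 \<in> wires_at J y" "w2 \<in> wires_at J y" using Cons.prems(1,2) unfolding x1 ps2 \<open>y2 = y\<close> by auto
  have "w1 = w2"
  proof (cases "extra \<in> wires_at J y")
    case True
    then show ?thesis using Cons.prems(3,4) unfolding x1 ps2 \<open>y2 = y\<close> by simp
  next
    case False
    have "y < length J" using walk_node_wire[OF Cons.prems(1), of y w1] unfolding x1 by simp
    then obtain t where "t < length I" "y = emb t" using extra_iff_not_emb False by blast
    then have "c \<le> w1" "c \<le> w2" using w wires_at_emb by auto
    moreover have "w1 - c = w2 - c"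
      using Cons.prems(5) False unfolding x1 ps2 \<open>y2 = y\<close> restrict_nodes_Cons by simp
    ultimately show ?thesis by simp
  qed
  moreover have "restrict_nodes rest1 = restrict_nodes rest2"
    using Cons.prems(5) unfolding x1 ps2 \<open>y2 = y\<close> \<open>w1 = w2\<close> restrict_nodes_Cons by (simp split: if_splits)
  ultimately show ?case
    using Cons.IH[of w1 "Some y" rest2] Cons.prems(1-4) unfolding x1 ps2 \<open>y2 = y\<close> by simp
qed

lemma distinct_restrict_nodes:
  assumes "\<forall>(t, w) \<in> set ps. t < length J" and "distinct (map fst ps)"
  shows "distinct (map fst (restrict_nodes ps))"
proof -
  let ?old = "filter (\<lambda>(t, w). extra \<notin> wires_at J t) ps"
  have "map fst (restrict_nodes ps) = map node (map fst ?old)"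
    by (simp add: restrict_nodes_def comp_def case_prod_beta)
  moreover have "inj_on node (fst ` set ?old)"
  proof (rule inj_onI)
    fix y1 y2 assume y: "y1 \<in> fst ` set ?old" "y2 \<in> fst ` set ?old" "node y1 = node y2"
    have "\<exists>t<length I. y = emb t" if "y \<in> fst ` set ?old" for y
    proof -
      from that obtain w where "(y, w) \<in> set ps" "extra \<notin> wires_at J y" by auto
      with assms(1) extra_iff_not_emb show ?thesis by blast
    qed
    then obtain t1 t2 where "t1 < length I" "y1 = emb t1" "t2 < length I" "y2 = emb t2"
      using y(1,2) by blast
    then show "y1 = y2" using y(3) node_emb by simp
  qed
  moreover have "distinct (map fst ?old)" using distinct_map_filter[OF assms(2)] .
  ultimately show ?thesis by (simp add: distinct_map comp_inj_on)
qed

lemma walk_pass_extra_node: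
  assumes "next_node J (k + c) (a + c) pJ = Some y" "extra \<in> wires_at J y" "walk J (k + c) (a + c) (Some y) ps"
    "1 \<le> a" "a \<le> N" "1 \<le> k" "k < N"
  shows "walk J (k + c) (a + c) pJ ((y, a + c) # ps)"
proof -
  have y: "y < length J" "a + c \<in> wires_at J y"
    using next_node_SomeD(1)[OF assms(1)] by (auto simp: candidates_def)
  moreover have "a + c \<noteq> extra" using shift_ne_extra assms(4,5) by blast
  ultimately have "\<not> forbidden_pass J (k + c) y (a + c)"
    using extra_node_not_forbidden[OF y(1) assms(2) y(2) _ assms(6,7)] by blast
  then show ?thesis using assms(1,3) y by simp
qed

lemma walk_lift_old_node:
  assumes "next_node J (k + c) (a + c) pJ = Some (emb t)" "next_node I k a pI = Some t" "t < length I"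
    "w0 \<in> wires_at I t" "w0 = a \<longrightarrow> \<not> forbidden_pass I k t a" "walk J (k + c) (w0 + c) (Some (emb t)) ps"
  shows "walk J (k + c) (a + c) pJ ((emb t, w0 + c) # ps)"
proof -
  have "a \<in> wires_at I t" using next_node_SomeD(1)[OF assms(2)] by (simp add: candidates_def)
  then show ?thesis using assms wires_at_emb[OF assms(3)] forbidden_pass_emb[OF assms(3)] by simp
qed

lemma lift_walk:
  assumes "walk I k a0 pI ps" "synchronized k a0 pI pJ" "1 \<le> a0" "a0 \<le> N" "1 \<le> k" "k < N"
  shows "\<exists>ps'. walk J (k + c) (a0 + c) pJ ps' \<and> no_switch_walk J extra (a0 + c) ps' \<and> restrict_nodes ps' = ps"
  using assms
proof (induction "length ps * (length J + 1) + card (candidates J (a0 \<le> k) (a0 + c) pJ)"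
    arbitrary: ps a0 pI pJ rule: less_induct)
  \<comment> \<open>each step either consumes a node of the walk in \<open>I\<close> or, at a node of the extra wire,
    shrinks the set of nodes still ahead on the current wire\<close>
  case less
  consider (final) "next_node J (k + c) (a0 + c) pJ = None"
    | (extra_node) y where "next_node J (k + c) (a0 + c) pJ = Some y" "extra \<in> wires_at J y"
    | (old_node) y where "next_node J (k + c) (a0 + c) pJ = Some y" "extra \<notin> wires_at J y"
    by (cases "next_node J (k + c) (a0 + c) pJ") auto
  then show ?case
  proof cases
    case final
    then have "ps = [] \<and> a0 = Suc k"
      using less.prems(1) next_node_None_restrict[OF less.prems(2)] by (cases ps) auto
    then show ?thesis using final by (intro exI[of _ "[]"]) simp
  next
    case extra_node
    have "card (candidates J (a0 \<le> k) (a0 + c) (Some y)) < card (candidates J (a0 \<le> k) (a0 + c) pJ)"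
      using psubset_card_mono[OF finite_candidates candidates_next_node_psubset[OF extra_node(1)]] by simp
    then have "length ps * (length J + 1) + card (candidates J (a0 \<le> k) (a0 + c) (Some y))
        < length ps * (length J + 1) + card (candidates J (a0 \<le> k) (a0 + c) pJ)" by simp
    then obtain rest where rest: "walk J (k + c) (a0 + c) (Some y) rest"
      "no_switch_walk J extra (a0 + c) rest" "restrict_nodes rest = ps"
      using less.hyps[OF _ less.prems(1) synchronized_next_extra[OF less.prems(2) extra_node] less.prems(3-6)]
      by blast
    then show ?thesis
      using walk_pass_extra_node[OF extra_node rest(1) less.prems(3-6)] extra_node(2) rest(2,3)
      by (intro exI[of _ "(y, a0 + c) # rest"]) (simp add: restrict_nodes_Cons)
  next
    case old_node
    obtain t where t: "t < length I" "y = emb t" "next_node I k a0 pI = Some t"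
      using next_node_old[OF less.prems(2) old_node] by blast
    then obtain w0 ps0 where ps: "ps = (t, w0) # ps0" using less.prems(1) by (cases ps) auto
    have w0: "w0 \<in> wires_at I t" and pass: "w0 = a0 \<longrightarrow> \<not> forbidden_pass I k t a0"
      and ps0: "walk I k w0 (Some t) ps0" using less.prems(1) unfolding ps by auto
    have "length ps0 * (length J + 1) + card (candidates J (w0 \<le> k) (w0 + c) (Some (emb t)))
        < length ps * (length J + 1) + card (candidates J (a0 \<le> k) (a0 + c) pJ)"
      using card_candidates_le[of J "w0 \<le> k" "w0 + c" "Some (emb t)"] unfolding ps by simp
    moreover have "1 \<le> w0" "w0 \<le> N" using wires_at_I[OF t(1)] w0 by auto
    ultimately obtain rest where rest: "walk J (k + c) (w0 + c) (Some (emb t)) rest"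
      "no_switch_walk J extra (w0 + c) rest" "restrict_nodes rest = ps0"
      using less.hyps[OF _ ps0 synchronized_emb[OF t(1)] _ _ less.prems(5,6)] by blast
    then show ?thesis
      using walk_lift_old_node[OF old_node(1)[unfolded t(2)] t(3,1) w0 pass rest(1)] extra_not_at_emb[OF t(1)]
        node_emb[OF t(1)] unfolding ps
      by (intro exI[of _ "(emb t, w0 + c) # rest"]) (simp add: restrict_nodes_Cons)
  qed
qed

lemma start_wire_shift:
  assumes "(k', ps) \<in> GP (Suc N) J" "no_switch_on_wire J extra (k', ps)"
  shows "\<exists>k. k' = k + c \<and> 1 \<le> k \<and> k < N"
proof -
  have k': "1 \<le> k'" "k' < Suc N" and walk: "walk J k' k' None ps"
    using assms(1) by (auto simp: GP_def rigorous_iff_walk)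
  have "Suc k' = extra \<longleftrightarrow> k' = extra"
    using no_switch_walk_end[OF walk] assms(2) no_switch_on_wire_iff_walk[OF walk] by blast
  then show ?thesis using extra_wire k' by (intro exI[of _ "k' - c"]) auto
qed

lemma restrict_in_GP:
  assumes "P \<in> GP (Suc N) J" "no_switch_on_wire J extra P"
  shows "restrict P \<in> GP N I"
proof -
  obtain k ps where P: "P = (k + c, ps)" "1 \<le> k" "k < N"
    using start_wire_shift assms by (cases P) blast
  have walk: "walk J (k + c) (k + c) None ps" and "distinct (map fst ps)"
    using assms(1) unfolding P by (auto simp: GP_def rigorous_iff_walk)
  moreover have "no_switch_walk J extra (k + c) ps"
    using assms(2) no_switch_on_wire_iff_walk[OF walk] unfolding P by blast
  ultimately have "walk I k k None (restrict_nodes ps)" "distinct (map fst (restrict_nodes ps))"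
    using restrict_walk[of k k None ps] synchronized_None distinct_restrict_nodes walk_node_wire[OF walk]
    by fastforce+
  then show ?thesis using P by (simp add: restrict_def GP_def rigorous_iff_walk)
qed

lemma inj_on_restrict: "inj_on restrict {P \<in> GP (Suc N) J. no_switch_on_wire J extra P}"
proof (rule inj_onI)
  fix P1 P2 assume P1: "P1 \<in> {P \<in> GP (Suc N) J. no_switch_on_wire J extra P}"
    and P2: "P2 \<in> {P \<in> GP (Suc N) J. no_switch_on_wire J extra P}" and eq: "restrict P1 = restrict P2"
  obtain k1 ps1 k2 ps2 where P: "P1 = (k1 + c, ps1)" "P2 = (k2 + c, ps2)"
    using start_wire_shift P1 P2 by (cases P1, cases P2) blast
  then have "k1 = k2" and ps: "restrict_nodes ps1 = restrict_nodes ps2" using eq by (auto simp: restrict_def)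
  have walks: "walk J (k1 + c) (k1 + c) None ps1" "walk J (k1 + c) (k1 + c) None ps2"
    using P1 P2 unfolding P \<open>k1 = k2\<close> by (auto simp: GP_def rigorous_iff_walk)
  then have "no_switch_walk J extra (k1 + c) ps1" "no_switch_walk J extra (k1 + c) ps2"
    using P1 P2 no_switch_on_wire_iff_walk unfolding P \<open>k1 = k2\<close> by auto
  then show "P1 = P2" using restrict_nodes_inj[OF walks _ _ ps] P \<open>k1 = k2\<close> by simp
qed

lemma GP_subset_image_restrict: "GP N I \<subseteq> restrict ` {P \<in> GP (Suc N) J. no_switch_on_wire J extra P}"
proof
  fix Q assume "Q \<in> GP N I"
  then obtain k ps where Q: "Q = (k, ps)" "1 \<le> k" "k < N" "walk I k k None ps" "distinct (map fst ps)"
    by (auto simp: GP_def rigorous_iff_walk)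
  obtain ps' where ps': "walk J (k + c) (k + c) None ps'" "no_switch_walk J extra (k + c) ps'"
    "restrict_nodes ps' = ps"
    using lift_walk[OF Q(4) synchronized_None Q(2) less_imp_le[OF Q(3)] Q(2,3)] by blast
  have "distinct (map fst ps')"
    using distinct_if_restrict_nodes_distinct[OF ps'(1,2) synchronized_None] ps'(3) Q(2,3,5)
    by (simp add: valid_origin_def)
  then have "(k + c, ps') \<in> GP (Suc N) J"
    using ps'(1) Q(2,3) extra_wire by (auto simp: GP_def rigorous_iff_walk)
  moreover have "no_switch_on_wire J extra (k + c, ps')"
    using no_switch_on_wire_iff_walk[OF ps'(1)] ps'(2) by blast
  moreover have "restrict (k + c, ps') = Q" using ps'(3) Q(1) by (simp add: restrict_def)
  ultimately show "Q \<in> restrict ` {P \<in> GP (Suc N) J. no_switch_on_wire J extra P}" by force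
qed

theorem bij_betw_restrict: "bij_betw restrict {P \<in> GP (Suc N) J. no_switch_on_wire J extra P} (GP N I)"
  unfolding bij_betw_def using inj_on_restrict restrict_in_GP GP_subset_image_restrict by blast

end

lemma bij_betw_inverse_card:
  assumes "bij_betw f {x \<in> A. Q x} B" "finite A"
  shows "(\<exists>g. inj_on g B \<and> g ` B = {x \<in> A. Q x} \<and> (\<forall>y\<in>B. f (g y) = y))
    \<and> card A = card B + card {x \<in> A. \<not> Q x}"
proof (intro conjI exI[of _ "inv_into {x \<in> A. Q x} f"])
  let ?S = "{x \<in> A. Q x}"
  have inv: "bij_betw (inv_into ?S f) B ?S" using bij_betw_inv_into[OF assms(1)] .
  then show "inj_on (inv_into ?S f) B" and "inv_into ?S f ` B = ?S"
    by (simp_all add: bij_betw_def)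
  show "\<forall>y\<in>B. f (inv_into ?S f y) = y"
    using assms(1) by (simp add: bij_betw_def f_inv_into_f)
  have "A = ?S \<union> {x \<in> A. \<not> Q x}" by blast
  then have "card A = card ?S + card {x \<in> A. \<not> Q x}"
    using card_Un_disjoint[of ?S "{x \<in> A. \<not> Q x}"] assms(2)
    by (metis (no_types, lifting) finite_Un disjoint_iff mem_Collect_eq)
  then show "card A = card B + card {x \<in> A. \<not> Q x}" using bij_betw_same_card[OF assms(1)] by simp
qed

section \<open>The extensions \<open>E\<^sub>D\<close> and \<open>E\<^sub>A\<close>\<close>

definition split_emb :: "nat \<Rightarrow> nat \<Rightarrow> nat \<Rightarrow> nat" where
  "split_emb p n t = (if t < p then t else t + n)"

definition split_node :: "nat \<Rightarrow> nat \<Rightarrow> nat \<Rightarrow> nat" where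
  "split_node p n y = (if y < p then y else y - n)"

locale word_split =
  fixes n p :: nat and i :: "nat list"
  assumes i_Sigma: "i \<in> Sigma n" and split_le: "p \<le> n * (n - 1) div 2"
begin

lemma length_i: "length i = n * (n - 1) div 2"
  using i_Sigma by (simp add: Sigma_def)

lemma letters_i: "set i \<subseteq> {1..<n}"
  using i_Sigma by (simp add: Sigma_def)

lemma letters_sublists:
  "set (take t i) \<subseteq> {1..<n}" "set (drop p i) \<subseteq> {1..<n}" "set (take t (drop p i)) \<subseteq> {1..<n}"
  using letters_i set_take_subset set_drop_subset by (fast, fast, fast)

lemma take_i_split: "p \<le> t \<Longrightarrow> take t i = take p i @ take (t - p) (drop p i)"
  using take_add[of p "t - p" i] by simp

lemma nth_i: "t < length i \<Longrightarrow> 1 \<le> i ! t \<and> i ! t < n"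
  using letters_i nth_mem by fastforce

lemma wires_at_i: "t < length i \<Longrightarrow> wires_at i t \<subseteq> {1..n}"
  using wires_at_subset[OF letters_i] by simp

lemma split_emb_facts:
  "t1 < t2 \<Longrightarrow> split_emb p n t1 < split_emb p n t2"
  "split_node p n (split_emb p n t) = t"
  "t < length i \<Longrightarrow> split_emb p n t < length i + n"
  by (auto simp: split_emb_def split_node_def)

lemma range_split_emb:
  "y < length i + n \<Longrightarrow> (\<exists>t<length i. y = split_emb p n t) \<longleftrightarrow> y < p \<or> p + n \<le> y"
proof
  assume "\<exists>t<length i. y = split_emb p n t"
  then show "y < p \<or> p + n \<le> y" by (auto simp: split_emb_def split: if_splits)
next
  assume y: "y < length i + n" "y < p \<or> p + n \<le> y"
  show "\<exists>t<length i. y = split_emb p n t"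
  proof (cases "y < p")
    case True
    then show ?thesis using split_le length_i by (intro exI[of _ y]) (simp add: split_emb_def)
  next
    case False
    then show ?thesis using y by (intro exI[of _ "y - n"]) (auto simp: split_emb_def)
  qed
qed

definition word_D :: "nat list" where
  "word_D = take p i @ rev [1..<Suc n] @ map Suc (drop p i)"

definition word_A :: "nat list" where
  "word_A = map Suc (take p i) @ [1..<Suc n] @ drop p i"

lemma length_word_D: "length word_D = length i + n"
  using split_le length_i by (simp add: word_D_def)

lemma word_D_before: "t < p \<Longrightarrow> take t word_D = take t i \<and> word_D ! t = i ! t"
  using split_le length_i by (simp add: word_D_def nth_append min_def)

lemma word_D_block:
  "r < n \<Longrightarrow> take (p + r) word_D = take p i @ rev [Suc n - r..<Suc n] \<and> word_D ! (p + r) = n - r"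
  using split_le length_i take_rev_upt[of r n] rev_upt_nth[of r n]
  by (simp add: word_D_def nth_append del: upt_Suc)

lemma word_D_after:
  "p \<le> t \<Longrightarrow> t < length i \<Longrightarrow>
     take (t + n) word_D = take p i @ rev [1..<Suc n] @ map Suc (take (t - p) (drop p i))
     \<and> word_D ! (t + n) = Suc (i ! t)"
  using split_le length_i by (simp add: word_D_def nth_append take_map del: upt_Suc) (use split_le length_i in arith)

lemma word_perm_word_D_after:
  assumes "p \<le> t" "t < length i" "1 \<le> q" "q \<le> n"
  shows "word_perm (take (t + n) word_D) (Suc q) = word_perm (take t i) q"
proof -
  define \<tau> where "\<tau> = word_perm (take (t - p) (drop p i))"
  have "1 \<le> \<tau> q \<and> \<tau> q \<le> n" unfolding \<tau>_def using word_perm_in_range[OF letters_sublists(3) assms(3,4)] .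
  then have "word_perm (take (t + n) word_D) (Suc q) = word_perm (take p i) (\<tau> q)"
    using word_D_after[OF assms(1,2)] word_perm_rev_upt_Suc
    by (simp add: word_perm_append word_perm_map_Suc \<tau>_def del: upt_Suc)
  also have "\<dots> = word_perm (take t i) q" using take_i_split[OF assms(1)] by (simp add: word_perm_append \<tau>_def)
  finally show ?thesis .
qed

lemma word_D_emb_wires:
  assumes "t < length i"
  shows "word_perm (take (split_emb p n t) word_D) (word_D ! split_emb p n t) = word_perm (take t i) (i ! t) + 0"
    and "word_perm (take (split_emb p n t) word_D) (Suc (word_D ! split_emb p n t)) = word_perm (take t i) (Suc (i ! t)) + 0"
  using word_D_before[of t] word_D_after[OF _ assms] word_perm_word_D_after[OF _ assms] nth_i[OF assms]
  by (auto simp: split_emb_def)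

lemma letters_word_D: "set word_D \<subseteq> {1..<Suc n}"
  using letters_sublists(1)[of p] letters_sublists(2) by (auto simp: word_D_def simp del: upt_Suc)

lemma extra_wire_word_D: "p \<le> y \<Longrightarrow> y < p + n \<Longrightarrow> Suc n \<in> wires_at word_D y"
proof -
  assume y: "p \<le> y" "y < p + n"
  define r where "r = y - p"
  then have r: "r < n" "y = p + r" "Suc n - r = Suc (n - r)" using y by auto
  have "word_perm (rev [Suc n - r..<Suc n]) (Suc (n - r)) = Suc n"
    using word_perm_rev_upt[of "Suc n - r" n "Suc (n - r)"] r by (simp del: upt_Suc)
  then have "word_perm (take y word_D) (Suc (word_D ! y)) = word_perm (take p i) (Suc n)"
    using word_D_block[OF r(1)] r(2) by (simp add: word_perm_append del: upt_Suc)
  also have "\<dots> = Suc n" using word_perm_fixes_outside[OF letters_sublists(1)] by simp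
  finally show ?thesis unfolding wires_at_def by simp
qed

lemma diagram_embedding_word_D:
  "diagram_embedding i word_D (split_emb p n) (split_node p n) 0 n (Suc n)"
proof
  fix y assume "y < length word_D"
  moreover have "Suc n \<notin> wires_at word_D (split_emb p n t)" if "t < length i" for t
    using wires_at_i[OF that] word_D_emb_wires[OF that] by (auto simp: wires_at_def)
  ultimately show "Suc n \<notin> wires_at word_D y \<longleftrightarrow> (\<exists>t<length i. y = split_emb p n t)"
    using extra_wire_word_D[of y] range_split_emb[of y] length_word_D by (auto simp: not_less)
next
  fix u a k assume "u < length word_D" "Suc n \<in> wires_at word_D u" "a \<in> wires_at word_D u" "a \<noteq> Suc n"
    "1 \<le> k" "k < n"
  then show "\<not> forbidden_pass word_D (k + 0) u a"
    using other_wire_eq wires_at_subset[OF letters_word_D, of u] by (force simp: forbidden_pass_def Let_def)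
qed (use split_emb_facts length_word_D word_D_emb_wires wires_at_i in auto)

lemma word_perm_i_split: "word_perm (take p i) (word_perm (drop p i) q) = longest n q"
  using i_Sigma word_perm_append[of "take p i" "drop p i"] by (simp add: Sigma_def)

lemma word_D_Sigma: "word_D \<in> Sigma (Suc n)"
proof -
  let ?\<sigma> = "word_perm (take p i)" and ?\<tau> = "word_perm (drop p i)"
  have word: "word_perm word_D q = ?\<sigma> (word_perm (rev [1..<Suc n]) (shift_perm ?\<tau> q))" for q
    by (simp add: word_D_def word_perm_append word_perm_map_Suc del: upt_Suc)
  have fixed: "?\<sigma> q = q" "?\<tau> q = q" if "q = 0 \<or> n < q" for q
    using that word_perm_fixes_outside[OF letters_sublists(1)] word_perm_fixes_outside[OF letters_sublists(2)]
    by auto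
  have "word_perm word_D q = longest (Suc n) q" for q
  proof -
    consider "q = 0" | "q = 1" | x where "q = Suc x" "1 \<le> x" "x \<le> n" | "Suc n < q"
      by (cases q) force+
    then show ?thesis
    proof cases
      case 1
      then show ?thesis using word fixed word_perm_rev_upt[of 1 n 0] by (simp add: longest_def del: upt_Suc)
    next
      case 2
      then show ?thesis using word fixed word_perm_rev_upt[of 1 n 1] by (simp add: longest_def del: upt_Suc)
    next
      case 3
      then have "1 \<le> ?\<tau> x \<and> ?\<tau> x \<le> n" using word_perm_in_range[OF letters_sublists(2)] by blast
      then show ?thesis using 3 word word_perm_rev_upt_Suc word_perm_i_split by (simp add: longest_def)
    next
      case 4
      then have "shift_perm ?\<tau> q = q" using fixed(2)[of "q - 1"] by (simp add: shift_perm_def)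
      then show ?thesis using 4 word fixed word_perm_rev_upt[of 1 n q] by (simp add: longest_def del: upt_Suc)
    qed
  qed
  then show ?thesis
    using length_word_D length_i triangle_Suc letters_word_D by (auto simp: Sigma_def)
qed

lemma length_word_A: "length word_A = length i + n"
  using split_le length_i by (simp add: word_A_def del: upt_Suc)

lemma word_A_before: "t < p \<Longrightarrow> take t word_A = map Suc (take t i) \<and> word_A ! t = Suc (i ! t)"
  using split_le length_i by (simp add: word_A_def nth_append min_def take_map del: upt_Suc)

lemma word_A_block: "r < n \<Longrightarrow> take (p + r) word_A = map Suc (take p i) @ [1..<Suc r] \<and> word_A ! (p + r) = Suc r"
  using split_le length_i by (simp add: word_A_def nth_append take_upt del: upt_Suc)

lemma word_A_after:
  "p \<le> t \<Longrightarrow> t < length i \<Longrightarrow>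
     take (t + n) word_A = map Suc (take p i) @ [1..<Suc n] @ take (t - p) (drop p i) \<and> word_A ! (t + n) = i ! t"
  using split_le length_i by (simp add: word_A_def nth_append del: upt_Suc) (use split_le length_i in arith)

lemma word_perm_word_A_after:
  assumes "p \<le> t" "t < length i" "1 \<le> q" "q \<le> n"
  shows "word_perm (take (t + n) word_A) q = word_perm (take t i) q + 1"
proof -
  define \<tau> where "\<tau> = word_perm (take (t - p) (drop p i))"
  have "1 \<le> \<tau> q \<and> \<tau> q \<le> n" unfolding \<tau>_def using word_perm_in_range[OF letters_sublists(3) assms(3,4)] .
  then have "word_perm (take (t + n) word_A) q = word_perm (take p i) (\<tau> q) + 1"
    using word_A_after[OF assms(1,2)] word_perm_upt_Suc
    by (simp add: word_perm_append word_perm_map_Suc \<tau>_def del: upt_Suc)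
  also have "\<dots> = word_perm (take t i) q + 1" using take_i_split[OF assms(1)] by (simp add: word_perm_append \<tau>_def)
  finally show ?thesis .
qed

lemma word_A_emb_wires:
  assumes "t < length i"
  shows "word_perm (take (split_emb p n t) word_A) (word_A ! split_emb p n t) = word_perm (take t i) (i ! t) + 1"
    and "word_perm (take (split_emb p n t) word_A) (Suc (word_A ! split_emb p n t)) = word_perm (take t i) (Suc (i ! t)) + 1"
  using word_A_before[of t] word_A_after[OF _ assms] word_perm_word_A_after[OF _ assms] nth_i[OF assms]
  by (auto simp: split_emb_def word_perm_map_Suc)

lemma letters_word_A: "set word_A \<subseteq> {1..<Suc n}"
  using letters_sublists(1)[of p] letters_sublists(2) by (auto simp: word_A_def simp del: upt_Suc)

lemma extra_wire_word_A: "p \<le> y \<Longrightarrow> y < p + n \<Longrightarrow> 1 \<in> wires_at word_A y"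
proof -
  assume y: "p \<le> y" "y < p + n"
  define r where "r = y - p"
  then have r: "r < n" "y = p + r" using y by auto
  have "word_perm [1..<Suc r] (Suc r) = 1" using word_perm_upt[of r "Suc r"] by (simp del: upt_Suc)
  then have "word_perm (take y word_A) (word_A ! y) = shift_perm (word_perm (take p i)) 1"
    using word_A_block[OF r(1)] r(2) by (simp add: word_perm_append word_perm_map_Suc del: upt_Suc)
  also have "\<dots> = 1" using word_perm_fixes_outside[OF letters_sublists(1)] by (simp add: shift_perm_def)
  finally show ?thesis unfolding wires_at_def by simp
qed

lemma diagram_embedding_word_A:
  "diagram_embedding i word_A (split_emb p n) (split_node p n) 1 n 1"
proof
  fix y assume "y < length word_A"
  moreover have "1 \<notin> wires_at word_A (split_emb p n t)" if "t < length i" for t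
    using wires_at_i[OF that] word_A_emb_wires[OF that] by (auto simp: wires_at_def)
  ultimately show "1 \<notin> wires_at word_A y \<longleftrightarrow> (\<exists>t<length i. y = split_emb p n t)"
    using extra_wire_word_A[of y] range_split_emb[of y] length_word_A by (auto simp: not_less)
next
  fix u a k assume "u < length word_A" "1 \<in> wires_at word_A u" "a \<in> wires_at word_A u" "a \<noteq> 1"
    "1 \<le> k" "k < n"
  then show "\<not> forbidden_pass word_A (k + 1) u a"
    using other_wire_eq wires_at_subset[OF letters_word_A, of u] by (force simp: forbidden_pass_def Let_def)
qed (use split_emb_facts length_word_A word_A_emb_wires wires_at_i in auto)

lemma word_A_Sigma: "word_A \<in> Sigma (Suc n)"
proof -
  let ?\<sigma> = "word_perm (take p i)" and ?\<tau> = "word_perm (drop p i)"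
  have word: "word_perm word_A q = shift_perm ?\<sigma> (word_perm [1..<Suc n] (?\<tau> q))" for q
    by (simp add: word_A_def word_perm_append word_perm_map_Suc del: upt_Suc)
  have fixed: "?\<sigma> q = q" "?\<tau> q = q" if "q = 0 \<or> n < q" for q
    using that word_perm_fixes_outside[OF letters_sublists(1)] word_perm_fixes_outside[OF letters_sublists(2)]
    by auto
  have "word_perm word_A q = longest (Suc n) q" for q
  proof -
    consider "q = 0" | "1 \<le> q" "q \<le> n" | "q = Suc n" | "Suc n < q" by linarith
    then show ?thesis
    proof cases
      case 1
      then show ?thesis using word fixed word_perm_upt[of n 0] by (simp add: longest_def del: upt_Suc)
    next
      case 2
      then have "1 \<le> ?\<tau> q \<and> ?\<tau> q \<le> n" using word_perm_in_range[OF letters_sublists(2)] by blast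
      then show ?thesis using 2 word word_perm_upt_Suc word_perm_i_split by (simp add: longest_def)
    next
      case 3
      then show ?thesis using word fixed word_perm_upt[of n "Suc n"] by (simp add: longest_def del: upt_Suc)
    next
      case 4
      then have "?\<sigma> (q - 1) = q - 1" using fixed(1) by simp
      then show ?thesis using 4 word fixed word_perm_upt[of n q] by (simp add: longest_def shift_perm_def del: upt_Suc)
    qed
  qed
  then show ?thesis
    using length_word_A length_i triangle_Suc letters_word_A by (auto simp: Sigma_def)
qed

end

definition ext_shift :: "ext_kind \<Rightarrow> nat" where
  "ext_shift b = (case b of ExtD \<Rightarrow> 0 | ExtA \<Rightarrow> 1)"

lemma ext_embedding:
  assumes "i \<in> Sigma n" "s \<le> n * (n - 1) div 2" and p: "p = n * (n - 1) div 2 - s"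
  shows "ext b n s i \<in> Sigma (Suc n)"
    and "diagram_embedding i (ext b n s i) (split_emb p n) (split_node p n) (ext_shift b) n (ext_wire b n)"
    and "restrict_path b n s (ext b n s i) P
           = diagram_embedding.restrict (ext b n s i) (split_node p n) (ext_shift b) (ext_wire b n) P"
proof -
  interpret word_split n p i using assms by unfold_locales simp_all
  have ext: "ext ExtD n s i = word_D" "ext ExtA n s i = word_A"
    unfolding ext_def word_D_def word_A_def Let_def p[symmetric] by simp_all
  show "ext b n s i \<in> Sigma (Suc n)"
    using word_D_Sigma word_A_Sigma ext by (cases b) simp_all
  show emb: "diagram_embedding i (ext b n s i) (split_emb p n) (split_node p n) (ext_shift b) n (ext_wire b n)"
    using diagram_embedding_word_D diagram_embedding_word_A ext
    by (cases b) (simp_all add: ext_shift_def ext_wire_def)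
  show "restrict_path b n s (ext b n s i) P
          = diagram_embedding.restrict (ext b n s i) (split_node p n) (ext_shift b) (ext_wire b n) P"
    unfolding diagram_embedding.restrict_def[OF emb] diagram_embedding.restrict_nodes_def[OF emb]
    unfolding restrict_path_def split_node_def p ext_shift_def ext_wire_def Let_def
    by (cases b) (simp_all add: case_prod_beta)
qed

theorem mainTheorem10:
  fixes n s :: nat and i :: "nat list" and b :: ext_kind
  assumes "n \<ge> 2" and "i \<in> Sigma n" and "s \<le> n * (n - 1) div 2"
  shows "ext b n s i \<in> Sigma (Suc n)
    \<and> (\<exists>\<Psi> :: path \<Rightarrow> path.
         inj_on \<Psi> (GP n i)
       \<and> \<Psi> ` GP n i = {P \<in> GP (Suc n) (ext b n s i).
                          no_switch_on_wire (ext b n s i) (ext_wire b n) P}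
       \<and> (\<forall>P \<in> GP n i. restrict_path b n s (ext b n s i) (\<Psi> P) = P))
    \<and> card (GP (Suc n) (ext b n s i)) = card (GP n i)
        + card {P \<in> GP (Suc n) (ext b n s i).
                  \<not> no_switch_on_wire (ext b n s i) (ext_wire b n) P}"
proof -
  let ?p = "n * (n - 1) div 2 - s"
  interpret E: diagram_embedding i "ext b n s i" "split_emb ?p n" "split_node ?p n" "ext_shift b" n "ext_wire b n"
    using ext_embedding(2)[OF assms(2,3) refl] .
  have "restrict_path b n s (ext b n s i) P = E.restrict P" for P
    using ext_embedding(3)[OF assms(2,3) refl] .
  then show ?thesis
    using ext_embedding(1)[OF assms(2,3) refl] bij_betw_inverse_card[OF E.bij_betw_restrict finite_GP]
    by simp
qed

end
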